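(* Let $P$ be a finite poset and $q$ a positive integer. For every $f\in\mathrm{Inc}^q(P)$, $\mathrm{JdtPro}(f)\in\mathrm{Inc}^q(P)$.
   Context: $\mathrm{Inc}^q(P)$ is the set of $f:P\to\{1,\dots,q\}$ with $p_1<p_2\Rightarrow f(p_1)<f(p_2)$. For labelings $g:P\to\mathbb{Z}\cup\{\square\}$, the slide $\sigma_i$ is defined (simultaneously at all $x$, using the values of $g$) by $\sigma_i(g)(x)=i$ if $g(x)=\square$ and $g(y)=i$ for some $y\gtrdot x$; $\sigma_i(g)(x)=\square$ if $g(x)=i$ and $g(z)=\square$ for some $z\lessdot x$; $\sigma_i(g)(x)=g(x)$ otherwise. $\sigma_{a\to b}$ replaces every label $a$ by $b$. $jdt(f)=\sigma_{\square\to q+1}\circ\sigma_q\circ\cdots\circ\sigma_2\circ\sigma_{1\to\square}(f)$ and $\mathrm{JdtPro}(f)(x)=jdt(f)(x)-1$. *)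

theory Defs
  imports Main
begin

text \<open>A finite poset is modelled as a finite carrier set P of a type with a partial order;
  the order on P is the induced one. Labelings P -> Z \<union> {box} are functions into int option,
  with None playing the role of the empty box.\<close>

definition covers :: "'a::order set \<Rightarrow> 'a \<Rightarrow> 'a \<Rightarrow> bool" where
  "covers P x y \<longleftrightarrow> x \<in> P \<and> y \<in> P \<and> x < y \<and> \<not> (\<exists>z\<in>P. x < z \<and> z < y)"

definition Inc :: "nat \<Rightarrow> 'a::order set \<Rightarrow> ('a \<Rightarrow> int) set" where
  "Inc q P = {f. (\<forall>x\<in>P. f x \<in> {1..int q}) \<and> (\<forall>x\<in>P. \<forall>y\<in>P. x < y \<longrightarrow> f x < f y)}"

definition slide :: "'a::order set \<Rightarrow> int \<Rightarrow> ('a \<Rightarrow> int option) \<Rightarrow> ('a \<Rightarrow> int option)" where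
  "slide P i g = (\<lambda>x.
     if g x = None \<and> (\<exists>y. covers P x y \<and> g y = Some i) then Some i
     else if g x = Some i \<and> (\<exists>z. covers P z x \<and> g z = None) then None
     else g x)"

definition relabel :: "int option \<Rightarrow> int option \<Rightarrow> ('a \<Rightarrow> int option) \<Rightarrow> ('a \<Rightarrow> int option)" where
  "relabel a b g = (\<lambda>x. if g x = a then b else g x)"

text \<open>jdt(f) = sigma_{box -> q+1} o sigma_q o ... o sigma_2 o sigma_{1 -> box} (f).\<close>
definition jdt :: "'a::order set \<Rightarrow> nat \<Rightarrow> ('a \<Rightarrow> int) \<Rightarrow> ('a \<Rightarrow> int option)" where
  "jdt P q f = relabel None (Some (int q + 1))
      (foldl (\<lambda>g i. slide P i g) (relabel (Some 1) None (\<lambda>x. Some (f x))) [2..int q])"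

definition JdtPro :: "'a::order set \<Rightarrow> nat \<Rightarrow> ('a \<Rightarrow> int) \<Rightarrow> ('a \<Rightarrow> int)" where
  "JdtPro P q f = (\<lambda>x. the (jdt P q f x) - 1)"

end

theory Submission
  imports Defs
begin

text \<open>Before sliding the label i, the labelled elements increase along the order, the boxes form
  an antichain, every label below a box is smaller than i and every label above a box is at
  least i. Sliding i moves exactly the labels i that sit directly above a box, which preserves
  these conditions with i replaced by i + 1. After the last slide every label above a box
  would exceed q, so no label lies above a box and filling the boxes with q + 1 keeps the
  labelling increasing. Since slides only move existing labels, the values stay in [2, q].\<close>

lemma exists_covers_above:
  fixes P :: "'a::order set"
  assumes "finite P" "x \<in> P" "y \<in> P" "x < y"
  shows "\<exists>c. covers P x c \<and> c \<le> y"
proof -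
  let ?S = "{c\<in>P. x < c \<and> c \<le> y}"
  have "finite ?S" "?S \<noteq> {}" using assms by auto
  then obtain m where m: "m \<in> ?S" "\<forall>b\<in>?S. b \<le> m \<longrightarrow> m = b"
    using finite_has_minimal by blast
  then have "covers P x m"
    unfolding covers_def using assms(2) by (fastforce dest: less_imp_le)
  with m show ?thesis by auto
qed

lemma exists_covers_below:
  fixes P :: "'a::order set"
  assumes "finite P" "x \<in> P" "y \<in> P" "x < y"
  shows "\<exists>c. covers P c y \<and> x \<le> c"
proof -
  let ?S = "{c\<in>P. x \<le> c \<and> c < y}"
  have "finite ?S" "?S \<noteq> {}" using assms by auto
  then obtain m where m: "m \<in> ?S" "\<forall>b\<in>?S. m \<le> b \<longrightarrow> m = b"
    using finite_has_maximal by blast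
  then have "covers P m y"
    unfolding covers_def using assms(3) by (fastforce dest: less_imp_le)
  with m show ?thesis by auto
qed

lemma covers_imp_less: "covers P x y \<Longrightarrow> x \<in> P \<and> y \<in> P \<and> x < y"
  unfolding covers_def by blast

lemma slide_eq_Some:
  assumes "slide P i g x = Some b"
  shows "(g x = Some b \<and> \<not> (b = i \<and> (\<exists>z. covers P z x \<and> g z = None))) \<or>
         (g x = None \<and> b = i \<and> (\<exists>y. covers P x y \<and> g y = Some i))"
  using assms unfolding slide_def by (auto split: if_splits)

lemma slide_eq_None:
  assumes "slide P i g x = None"
  shows "(g x = None \<and> \<not> (\<exists>y. covers P x y \<and> g y = Some i)) \<or>
         (g x = Some i \<and> (\<exists>z. covers P z x \<and> g z = None))"
  using assms unfolding slide_def by (auto split: if_splits)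

lemma slide_labels_subset:
  assumes "\<forall>x\<in>P. \<forall>v. g x = Some v \<longrightarrow> v \<in> S"
  shows "\<forall>x\<in>P. \<forall>v. slide P i g x = Some v \<longrightarrow> v \<in> S"
  using assms slide_eq_Some covers_imp_less by metis

lemma foldl_slide_labels_subset:
  assumes "\<forall>x\<in>P. \<forall>v. g x = Some v \<longrightarrow> v \<in> S"
  shows "\<forall>x\<in>P. \<forall>v. foldl (\<lambda>g i. slide P i g) g is x = Some v \<longrightarrow> v \<in> S"
  using assms
proof (induction "is" arbitrary: g)
  case (Cons i "is")
  from Cons.IH[OF slide_labels_subset[OF Cons.prems]] show ?case by simp
qed simp

definition jdt_invariant :: "'a::order set \<Rightarrow> int \<Rightarrow> ('a \<Rightarrow> int option) \<Rightarrow> bool" where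
  "jdt_invariant P i g \<longleftrightarrow>
    (\<forall>x\<in>P. \<forall>y\<in>P. \<forall>a b. x < y \<longrightarrow> g x = Some a \<longrightarrow> g y = Some b \<longrightarrow> a < b) \<and>
    (\<forall>x\<in>P. \<forall>y\<in>P. \<forall>b. g x = None \<longrightarrow> g y = Some b \<longrightarrow> y < x \<longrightarrow> b < i) \<and>
    (\<forall>x\<in>P. \<forall>y\<in>P. \<forall>b. g x = None \<longrightarrow> g y = Some b \<longrightarrow> x < y \<longrightarrow> i \<le> b) \<and>
    (\<forall>x\<in>P. \<forall>y\<in>P. g x = None \<longrightarrow> g y = None \<longrightarrow> \<not> x < y)"

lemma
  assumes "jdt_invariant P i g"
  shows jdt_invariant_labels_increasing:
      "x \<in> P \<Longrightarrow> y \<in> P \<Longrightarrow> x < y \<Longrightarrow> g x = Some a \<Longrightarrow> g y = Some b \<Longrightarrow> a < b"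
    and jdt_invariant_labels_below_box:
      "x \<in> P \<Longrightarrow> y \<in> P \<Longrightarrow> g x = None \<Longrightarrow> g y = Some b \<Longrightarrow> y < x \<Longrightarrow> b < i"
    and jdt_invariant_labels_above_box:
      "x \<in> P \<Longrightarrow> y \<in> P \<Longrightarrow> g x = None \<Longrightarrow> g y = Some b \<Longrightarrow> x < y \<Longrightarrow> i \<le> b"
    and jdt_invariant_boxes_antichain:
      "x \<in> P \<Longrightarrow> y \<in> P \<Longrightarrow> g x = None \<Longrightarrow> g y = None \<Longrightarrow> \<not> x < y"
  using assms unfolding jdt_invariant_def by blast+

context
  fixes P :: "'a::order set" and i :: int and g :: "'a \<Rightarrow> int option"
  assumes fin: "finite P" and invariant: "jdt_invariant P i g"
begin

private lemmas labels_increasing = jdt_invariant_labels_increasing[OF invariant]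
  and labels_below_box = jdt_invariant_labels_below_box[OF invariant]
  and labels_above_box = jdt_invariant_labels_above_box[OF invariant]
  and boxes_antichain = jdt_invariant_boxes_antichain[OF invariant]

text \<open>An element strictly between a box x and a label i above it would carry a label that is
  both at least i and less than i.\<close>

lemma exists_box_covered_by_label:
  assumes "x \<in> P" "y \<in> P" "g x = None" "g y = Some i" "x < y"
  shows "\<exists>z. covers P z y \<and> g z = None"
proof -
  obtain c where c: "covers P c y" "x \<le> c" using exists_covers_below[OF fin assms(1,2,5)] by blast
  have "g c = None"
  proof (cases "c = x")
    case False
    with c have c_between: "x < c" "c \<in> P" "c < y" using covers_imp_less by auto
    show ?thesis
    proof (cases "g c")
      case (Some v)
      have "i \<le> v" using labels_above_box[OF assms(1) c_between(2) assms(3) Some c_between(1)] .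
      moreover have "v < i" using labels_increasing[OF c_between(2) assms(2) c_between(3) Some assms(4)] .
      ultimately show ?thesis by simp
    qed simp
  qed (use assms in simp)
  with c show ?thesis by blast
qed

lemma exists_label_covering_box:
  assumes "x \<in> P" "y \<in> P" "g x = None" "g y = Some i" "x < y"
  shows "\<exists>c. covers P x c \<and> g c = Some i"
proof -
  obtain c where c: "covers P x c" "c \<le> y" using exists_covers_above[OF fin assms(1,2,5)] by blast
  have "g c = Some i"
  proof (cases "c = y")
    case False
    with c have c_between: "x < c" "c \<in> P" "c < y" using covers_imp_less by auto
    show ?thesis
    proof (cases "g c")
      case None
      with boxes_antichain[OF assms(1) c_between(2) assms(3)] c_between(1) show ?thesis by simp
    next
      case (Some v)
      have "i \<le> v" using labels_above_box[OF assms(1) c_between(2) assms(3) Some c_between(1)] .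
      moreover have "v < i" using labels_increasing[OF c_between(2) assms(2) c_between(3) Some assms(4)] .
      ultimately show ?thesis by simp
    qed
  qed (use assms in simp)
  with c show ?thesis by blast
qed

lemma jdt_invariant_slide: "jdt_invariant P (i + 1) (slide P i g)"
proof -
  let ?g = "slide P i g"
  have increasing: "a < b"
    if h: "x \<in> P" "y \<in> P" "x < y" "?g x = Some a" "?g y = Some b" for x y a b
    using slide_eq_Some[OF h(4)] slide_eq_Some[OF h(5)]
  proof (elim disjE conjE)
    assume gx: "g x = None" "a = i" and gy: "g y = Some b"
      and "\<not> (b = i \<and> (\<exists>z. covers P z y \<and> g z = None))"
    then have "b \<noteq> i" using exists_box_covered_by_label h by blast
    moreover have "i \<le> b" using labels_above_box h gx gy by blast
    ultimately show ?thesis using gx by simp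
  qed (use h labels_increasing labels_below_box boxes_antichain in blast)+
  have below: "b < i + 1"
    if h: "x \<in> P" "y \<in> P" "?g x = None" "?g y = Some b" "y < x" for x y b
    using slide_eq_None[OF h(3)] slide_eq_Some[OF h(4)]
  proof (elim disjE conjE)
    assume "g x = None" "g y = Some b"
    then show ?thesis using labels_below_box h by fastforce
  next
    assume "g x = Some i" "g y = Some b"
    then show ?thesis using labels_increasing h by fastforce
  qed simp_all
  have above: "i + 1 \<le> b"
    if h: "x \<in> P" "y \<in> P" "?g x = None" "?g y = Some b" "x < y" for x y b
    using slide_eq_None[OF h(3)] slide_eq_Some[OF h(4)]
  proof (elim disjE conjE)
    assume gx: "g x = None" and "\<not> (\<exists>c. covers P x c \<and> g c = Some i)" and gy: "g y = Some b"
    then have "b \<noteq> i" using exists_label_covering_box h by blast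
    moreover have "i \<le> b" using labels_above_box h gx gy by blast
    ultimately show ?thesis by simp
  next
    assume "g x = None" "g y = None"
    then show ?thesis using boxes_antichain h by blast
  next
    assume "g x = Some i" "g y = Some b"
    then show ?thesis using labels_increasing h by fastforce
  next
    assume "g x = Some i" "g y = None"
    then show ?thesis using labels_below_box h by fastforce
  qed
  have antichain: "\<not> x < y"
    if h: "x \<in> P" "y \<in> P" "?g x = None" "?g y = None" for x y
  proof
    assume xy: "x < y"
    from slide_eq_None[OF h(3)] slide_eq_None[OF h(4)] show False
    proof (elim disjE conjE)
      assume "g x = None" "\<not> (\<exists>c. covers P x c \<and> g c = Some i)" "g y = Some i"
      then show False using exists_label_covering_box h xy by blast
    next
      assume "g x = Some i" "g y = None"
      then show False using labels_below_box h xy by fastforce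
    next
      assume "g x = Some i" "g y = Some i"
      then show False using labels_increasing h xy by fastforce
    qed (use boxes_antichain h xy in blast)
  qed
  show ?thesis
    unfolding jdt_invariant_def
    by (intro conjI ballI allI impI) (fact increasing below above antichain)+
qed

end

lemma jdt_invariant_foldl_slide:
  fixes P :: "'a::order set"
  assumes "finite P" "jdt_invariant P i g"
  shows "jdt_invariant P (i + int n) (foldl (\<lambda>g k. slide P k g) g [i..i + int n - 1])"
proof (induction n)
  case 0
  then show ?case using assms(2) by simp
next
  case (Suc n)
  have "[i..i + int (Suc n) - 1] = [i..i + int n - 1] @ [i + int n]"
    using upto_rec2[of i "i + int n"] by simp
  with jdt_invariant_slide[OF assms(1) Suc.IH] show ?case by (simp add: ac_simps)
qed

lemma jdt_invariant_initial:
  assumes "f \<in> Inc q P"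
  shows "jdt_invariant P 2 (relabel (Some 1) None (\<lambda>x. Some (f x)))"
  using assms unfolding Inc_def jdt_invariant_def relabel_def
  by (auto split: if_splits) fastforce+

lemma initial_labels:
  assumes "f \<in> Inc q P"
  shows "\<forall>x\<in>P. \<forall>v. relabel (Some 1) None (\<lambda>x. Some (f x)) x = Some v \<longrightarrow> v \<in> {2..int q}"
  using assms unfolding Inc_def relabel_def by (auto split: if_splits)

lemma JdtPro_eq_case:
  "JdtPro P q f = (\<lambda>x. case foldl (\<lambda>g i. slide P i g) (relabel (Some 1) None (\<lambda>x. Some (f x)))
     [2..int q] x of None \<Rightarrow> int q | Some v \<Rightarrow> v - 1)"
  unfolding JdtPro_def jdt_def relabel_def by (auto split: option.splits)

lemma final_filling_Inc:
  assumes "q > 0" and invariant: "jdt_invariant P (int q + 1) G"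
    and labels: "\<forall>x\<in>P. \<forall>v. G x = Some v \<longrightarrow> v \<in> {2..int q}"
  shows "(\<lambda>x. case G x of None \<Rightarrow> int q | Some v \<Rightarrow> v - 1) \<in> Inc q P"
  unfolding Inc_def
proof (intro CollectI conjI ballI impI)
  fix x assume "x \<in> P"
  then show "(case G x of None \<Rightarrow> int q | Some v \<Rightarrow> v - 1) \<in> {1..int q}"
    using labels assms(1) by (cases "G x") auto
next
  fix x y assume h: "x \<in> P" "y \<in> P" "x < y"
  show "(case G x of None \<Rightarrow> int q | Some v \<Rightarrow> v - 1) < (case G y of None \<Rightarrow> int q | Some v \<Rightarrow> v - 1)"
  proof (cases "G x"; cases "G y")
    assume "G x = None" "G y = None"
    with jdt_invariant_boxes_antichain[OF invariant h(1,2)] h(3) show ?thesis by simp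
  next
    fix b assume "G x = None" "G y = Some b"
    with jdt_invariant_labels_above_box[OF invariant h(1,2)] h labels show ?thesis by fastforce
  next
    fix a assume "G x = Some a" "G y = None"
    with labels h(1) show ?thesis by auto
  next
    fix a b assume "G x = Some a" "G y = Some b"
    with jdt_invariant_labels_increasing[OF invariant h] show ?thesis by simp
  qed
qed

theorem proposition3p4:
  fixes P :: "'a::order set" and q :: nat and f :: "'a \<Rightarrow> int"
  assumes "finite P" and "q > 0" and "f \<in> Inc q P"
  shows "JdtPro P q f \<in> Inc q P"
proof -
  let ?g0 = "relabel (Some 1) None (\<lambda>x. Some (f x))"
  let ?G = "foldl (\<lambda>g i. slide P i g) ?g0 [2..int q]"
  have "jdt_invariant P (2 + int (q - 1)) (foldl (\<lambda>g i. slide P i g) ?g0 [2..2 + int (q - 1) - 1])"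
    using jdt_invariant_foldl_slide[OF assms(1) jdt_invariant_initial[OF assms(3)]] .
  then have "jdt_invariant P (int q + 1) ?G"
    using assms(2) by (simp add: of_nat_diff ac_simps)
  moreover have "\<forall>x\<in>P. \<forall>v. ?G x = Some v \<longrightarrow> v \<in> {2..int q}"
    using foldl_slide_labels_subset[OF initial_labels[OF assms(3)]] .
  ultimately show ?thesis
    unfolding JdtPro_eq_case by (rule final_filling_Inc[OF assms(2)])
qed

end
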